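(* Let $n\in\mathbb N$, $\varepsilon\in[0,\frac18]$ and let $C\subset A_n$ be a von Neumann subalgebra such that $\frac1n\sum_{i=1}^n\|X_{n,i}-\mathrm E_C(X_{n,i})\|_2^2\leq\varepsilon$. Then $\dim(Cz)\geq 2^{\,n-\mathrm H(4\varepsilon)n-3}$ for any projection $z\in C$ with $\tau(z)\geq\frac12$.
   Context: $A_n=\bigotimes_{k=1}^n\mathbb C^2\cong\mathbb C^{2^n}$ (equivalently $L^\infty(\{0,1\}^n)$) with its normalized trace $\tau$ (uniform measure) and $\|x\|_2=\tau(x^*x)^{1/2}$. $X_{n,i}=1\otimes\cdots\otimes\sigma\otimes\cdots\otimes1$ with $\sigma=(1,-1)\in\mathbb C^2$ in the $i$-th position. Von Neumann subalgebras are unital $*$-subalgebras; $\mathrm E_C$ is the trace-preserving conditional expectation onto $C$. $\mathrm H(\delta)=-\delta\log_2\delta-(1-\delta)\log_2(1-\delta)$ is the binary entropy function (with the convention $\mathrm H(0)=0$). *)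

theory Defs
  imports "HOL-Analysis.Analysis" "HOL-Library.Function_Algebras"
begin

text \<open>A_n = L^\<infinity>({0,1}^n), with the index set {1..n} modelled by a finite type 'n
  (so n = CARD('n)); points of {0,1}^n are maps 'n \<Rightarrow> bool (True = 1).\<close>

type_synonym 'n alg = "('n \<Rightarrow> bool) \<Rightarrow> complex"

definition tr :: "'n::finite alg \<Rightarrow> complex" where
  "tr f = (\<Sum>x\<in>UNIV. f x) / of_nat (CARD('n \<Rightarrow> bool))"

definition norm2 :: "'n::finite alg \<Rightarrow> real" where
  "norm2 f = sqrt (Re (tr (\<lambda>x. cnj (f x) * f x)))"

text \<open>X_{n,i}: \<sigma> = (1,-1) in the i-th tensor factor.\<close>
definition Xop :: "'n \<Rightarrow> 'n alg" where
  "Xop i = (\<lambda>x. if x i then -1 else 1)"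

text \<open>Von Neumann subalgebra = unital *-subalgebra (finite dimensional case).\<close>
definition vN_subalg :: "'n alg set \<Rightarrow> bool" where
  "vN_subalg C \<longleftrightarrow> (\<lambda>x. 1) \<in> C
     \<and> (\<forall>f\<in>C. \<forall>g\<in>C. (\<lambda>x. f x + g x) \<in> C)
     \<and> (\<forall>a. \<forall>f\<in>C. (\<lambda>x. a * f x) \<in> C)
     \<and> (\<forall>f\<in>C. \<forall>g\<in>C. (\<lambda>x. f x * g x) \<in> C)
     \<and> (\<forall>f\<in>C. (\<lambda>x. cnj (f x)) \<in> C)"

text \<open>Trace-preserving conditional expectation onto C: the tau-orthogonal projection onto C.\<close>
definition condexp :: "'n::finite alg set \<Rightarrow> 'n alg \<Rightarrow> 'n alg" where
  "condexp C f = (THE g. g \<in> C \<and> (\<forall>c\<in>C. tr (\<lambda>x. cnj (c x) * (f x - g x)) = 0))"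

definition is_proj :: "'n alg \<Rightarrow> bool" where
  "is_proj z \<longleftrightarrow> (\<forall>x. z x * z x = z x \<and> cnj (z x) = z x)"

definition cdim :: "'n alg set \<Rightarrow> nat" where
  "cdim S = vector_space.dim (\<lambda>(a::complex) f. (\<lambda>x. a * f x)) S"

definition bin_entropy :: "real \<Rightarrow> real" where
  "bin_entropy d = (if d = 0 then 0 else - d * log 2 d - (1 - d) * log 2 (1 - d))"

end

theory Submission
  imports Defs
begin

(* A unital *-subalgebra C of the functions on the cube {0,1}^n is the algebra of functions that
   are constant on the blocks of a partition of the cube, and E_C averages over these blocks.
   Rounding E_C(X_i)(x) to the nearer of +1 and -1 for every i gives a map m from the cube to
   itself that is constant on blocks, and m x differs from x in at most
   Sum_i |X_i(x) - E_C(X_i)(x)|^2 coordinates.  By the hypothesis and Markov's inequality at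
   least a quarter of the cube lies in the support of z and within Hamming distance 4 \<epsilon> n of its
   image under m.  Hamming balls of that radius contain at most 2^(H(4 \<epsilon>) n) points, so m takes
   at least 2^(n - H(4 \<epsilon>) n - 2) values there; for each such value y the functions
   (indicator of m = y) * z are nonzero, lie in Cz and have disjoint supports. *)

lemma vN_subalg_scale: "vN_subalg C \<Longrightarrow> f \<in> C \<Longrightarrow> (\<lambda>x. a * f x) \<in> C"
  by (simp add: vN_subalg_def)

lemma vN_subalg_const: "vN_subalg C \<Longrightarrow> (\<lambda>x. a) \<in> C"
  using vN_subalg_scale[of C "\<lambda>x. 1" a] by (simp add: vN_subalg_def)

lemma vN_subalg_diff:
  assumes C: "vN_subalg C" and "f \<in> C" "g \<in> C"
  shows "(\<lambda>x. f x - g x) \<in> C"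
proof -
  have "(\<lambda>x. f x + (-1) * g x) \<in> C"
    using assms vN_subalg_scale[OF C \<open>g \<in> C\<close>, of "-1"] by (simp only: vN_subalg_def)
  then show ?thesis by simp
qed

lemma vN_subalg_sum:
  assumes "vN_subalg C" "\<And>a. a \<in> A \<Longrightarrow> f a \<in> C"
  shows "(\<lambda>x. \<Sum>a\<in>A. f a x) \<in> C"
  using assms(2)
proof (induction A rule: infinite_finite_induct)
  case (insert a A)
  then show ?case using assms(1) by (simp add: vN_subalg_def)
qed (use vN_subalg_const[OF assms(1)] in simp_all)

lemma vN_subalg_prod:
  assumes "vN_subalg C" "finite A" "\<And>a. a \<in> A \<Longrightarrow> f a \<in> C"
  shows "(\<lambda>x. \<Prod>a\<in>A. f a x) \<in> C"
  using assms(2,3)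
proof (induction A rule: finite_induct)
  case (insert a A)
  then show ?case using assms(1) by (simp add: vN_subalg_def)
qed (use assms(1) in \<open>simp add: vN_subalg_def\<close>)

(* The atoms of C: supports of the minimal projections of C. *)
definition block :: "'n alg set \<Rightarrow> ('n \<Rightarrow> bool) \<Rightarrow> ('n \<Rightarrow> bool) set" where
  "block C x = {y. \<forall>c\<in>C. c y = c x}"

lemma block_self [simp]: "x \<in> block C x"
  by (simp add: block_def)

lemma block_sym: "y \<in> block C x \<longleftrightarrow> x \<in> block C y"
  by (auto simp: block_def)

lemma block_eq: "y \<in> block C x \<Longrightarrow> block C y = block C x"
  by (auto simp: block_def)

lemma block_const: "c \<in> C \<Longrightarrow> y \<in> block C x \<Longrightarrow> c y = c x"
  by (simp add: block_def)

lemma block_nonempty [simp]: "block C x \<noteq> {}"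
  using block_self by blast

lemma indicator_block_in:
  fixes C :: "('n::finite) alg set"
  assumes C: "vN_subalg C"
  shows "indicator (block C x) \<in> C"
proof -
  have "\<exists>c. c \<in> C \<and> c y \<noteq> c x" if "y \<notin> block C x" for y
    using that by (auto simp: block_def)
  then obtain sep where sep: "\<And>y. y \<notin> block C x \<Longrightarrow> sep y \<in> C \<and> sep y y \<noteq> sep y x"
    by metis
  \<comment> \<open>Lagrange interpolation: the indicator is a product of factors vanishing at the points y
    outside the block and equal to 1 on it.\<close>
  define h where "h y = (\<lambda>w. (sep y w - sep y y) / (sep y x - sep y y))" for y
  have "h y \<in> C" if "y \<notin> block C x" for y
  proof -
    have "(\<lambda>w. inverse (sep y x - sep y y) * (sep y w - sep y y)) \<in> C"
      using sep[OF that] by (intro vN_subalg_scale[OF C] vN_subalg_diff[OF C] vN_subalg_const[OF C]) auto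
    then show ?thesis by (simp add: h_def divide_inverse mult.commute)
  qed
  then have "(\<lambda>w. \<Prod>y\<in>-block C x. h y w) \<in> C"
    by (intro vN_subalg_prod[OF C]) auto
  moreover have "(\<Prod>y\<in>-block C x. h y w) = indicator (block C x) w" for w
  proof (cases "w \<in> block C x")
    case True
    then have "h y w = 1" if "y \<notin> block C x" for y
      using sep[OF that] block_const[of "sep y" C w x] by (auto simp: h_def)
    then show ?thesis using True by simp
  next
    case False
    have "h w w = 0" by (simp add: h_def)
    then show ?thesis using False by (auto intro: prod_zero)
  qed
  ultimately show ?thesis by simp
qed

lemma block_constant_in:
  fixes C :: "('n::finite) alg set"
  assumes C: "vN_subalg C" and g: "\<And>x y. y \<in> block C x \<Longrightarrow> g y = g x"
  shows "g \<in> C"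
proof -
  have "(\<Sum>y\<in>UNIV. g y / card (block C y) * indicator (block C y) w) = g w" for w
  proof -
    have "(\<Sum>y\<in>UNIV. g y / card (block C y) * indicator (block C y) w)
        = (\<Sum>y\<in>block C w. g w / card (block C w))"
      by (rule sum.mono_neutral_cong_right) (auto simp: indicator_def block_sym g block_eq)
    also have "\<dots> = g w"
      by simp
    finally show ?thesis .
  qed
  moreover have "(\<lambda>w. \<Sum>y\<in>UNIV. g y / card (block C y) * indicator (block C y) w) \<in> C"
    by (intro vN_subalg_sum[OF C] vN_subalg_scale[OF C] indicator_block_in[OF C])
  ultimately show ?thesis by simp
qed

definition block_avg :: "('n::finite) alg set \<Rightarrow> 'n alg \<Rightarrow> 'n alg" where
  "block_avg C f x = (\<Sum>y\<in>block C x. f y) / card (block C x)"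

lemma block_avg_in:
  fixes C :: "('n::finite) alg set"
  assumes "vN_subalg C"
  shows "block_avg C f \<in> C"
  using assms by (rule block_constant_in) (simp add: block_avg_def block_eq)

lemma sum_mult_block_avg:
  fixes C :: "('n::finite) alg set"
  assumes h: "\<And>x y. y \<in> block C x \<Longrightarrow> h y = h x"
  shows "(\<Sum>x\<in>UNIV. h x * block_avg C f x) = (\<Sum>x\<in>UNIV. h x * f x)"
proof -
  have "(\<Sum>x\<in>UNIV. h x * block_avg C f x)
      = (\<Sum>x\<in>UNIV. \<Sum>y\<in>UNIV. if x \<in> block C y then h y * f y / card (block C y) else 0)"
  proof (rule sum.cong[OF refl])
    fix x
    have "h x * block_avg C f x = (\<Sum>y\<in>block C x. h y * f y / card (block C y))"
      by (simp add: block_avg_def sum_distrib_left sum_divide_distrib h block_eq)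
    then show "h x * block_avg C f x
        = (\<Sum>y\<in>UNIV. if x \<in> block C y then h y * f y / card (block C y) else 0)"
      by (simp add: sum.If_cases block_sym)
  qed
  also have "\<dots> = (\<Sum>y\<in>UNIV. \<Sum>x\<in>block C y. h y * f y / card (block C y))"
    by (subst sum.swap) (simp add: sum.If_cases)
  also have "\<dots> = (\<Sum>y\<in>UNIV. h y * f y)"
    by simp
  finally show ?thesis .
qed

lemma sum_cnj_mult_self_eq_0_iff:
  fixes d :: "'a \<Rightarrow> complex"
  assumes "finite A"
  shows "(\<Sum>x\<in>A. cnj (d x) * d x) = 0 \<longleftrightarrow> (\<forall>x\<in>A. d x = 0)"
proof -
  have "cnj (d x) * d x = of_real ((cmod (d x))\<^sup>2)" for x
    by (metis complex_norm_square mult.commute)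
  then have "(\<Sum>x\<in>A. cnj (d x) * d x) = of_real (\<Sum>x\<in>A. (cmod (d x))\<^sup>2)"
    by (simp only: of_real_sum)
  moreover have "(\<Sum>x\<in>A. (cmod (d x))\<^sup>2) = 0 \<longleftrightarrow> (\<forall>x\<in>A. d x = 0)"
    using assms by (simp add: sum_nonneg_eq_0_iff)
  ultimately show ?thesis
    by (metis of_real_eq_0_iff)
qed

lemma condexp_eq_block_avg:
  fixes C :: "('n::finite) alg set"
  assumes C: "vN_subalg C"
  shows "condexp C f = block_avg C f"
  unfolding condexp_def
proof (rule the_equality)
  have "(\<Sum>x\<in>UNIV. cnj (c x) * (f x - block_avg C f x)) = 0" if "c \<in> C" for c
    using sum_mult_block_avg[of C "\<lambda>x. cnj (c x)" f] block_const[OF that]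
    by (simp add: right_diff_distrib sum_subtractf)
  then show "block_avg C f \<in> C \<and> (\<forall>c\<in>C. tr (\<lambda>x. cnj (c x) * (f x - block_avg C f x)) = 0)"
    using block_avg_in[OF C] by (simp add: tr_def)
next
  fix g assume g: "g \<in> C \<and> (\<forall>c\<in>C. tr (\<lambda>x. cnj (c x) * (f x - g x)) = 0)"
  define d where "d x = g x - block_avg C f x" for x
  have "d \<in> C"
    using g block_avg_in[OF C] vN_subalg_diff[OF C] unfolding d_def by blast
  then have "(\<Sum>x\<in>UNIV. cnj (d x) * (f x - g x)) = 0"
    and "(\<Sum>x\<in>UNIV. cnj (d x) * (f x - block_avg C f x)) = 0"
    using g sum_mult_block_avg[of C "\<lambda>x. cnj (d x)" f] block_const[of d C]
    by (auto simp: tr_def right_diff_distrib sum_subtractf)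
  then have "(\<Sum>x\<in>UNIV. cnj (d x) * (f x - block_avg C f x) - cnj (d x) * (f x - g x)) = 0"
    by (simp add: sum_subtractf)
  moreover have "cnj (d x) * (f x - block_avg C f x) - cnj (d x) * (f x - g x) = cnj (d x) * d x" for x
    by (simp add: d_def algebra_simps)
  ultimately have "(\<Sum>x\<in>UNIV. cnj (d x) * d x) = 0"
    by simp
  then have "\<forall>x. d x = 0"
    by (simp add: sum_cnj_mult_self_eq_0_iff)
  then show "g = block_avg C f"
    by (simp add: d_def fun_eq_iff)
qed

lemma norm2_squared:
  fixes f :: "('n::finite) alg"
  shows "(norm2 f)\<^sup>2 = (\<Sum>x\<in>UNIV. (cmod (f x))\<^sup>2) / CARD('n \<Rightarrow> bool)"
proof -
  have "cnj (f x) * f x = of_real ((cmod (f x))\<^sup>2)" for x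
    by (metis complex_norm_square mult.commute)
  then have "Re (tr (\<lambda>x. cnj (f x) * f x)) = (\<Sum>x\<in>UNIV. (cmod (f x))\<^sup>2) / CARD('n \<Rightarrow> bool)"
    by (simp add: tr_def Re_divide_of_nat flip: of_real_sum)
  moreover have "0 \<le> (\<Sum>x\<in>UNIV. (cmod (f x))\<^sup>2) / CARD('n \<Rightarrow> bool)"
    by (simp add: sum_nonneg)
  ultimately show ?thesis
    by (simp add: norm2_def)
qed

lemma Re_tr_proj:
  fixes z :: "('n::finite) alg"
  assumes "is_proj z"
  shows "Re (tr z) = card {x. z x \<noteq> 0} / CARD('n \<Rightarrow> bool)"
proof -
  have zero_one: "z x = 0 \<or> z x = 1" for x
    using assms[unfolded is_proj_def, rule_format, of x]
    by (metis mult_cancel_right1 mult_zero_right)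
  have "Re (z x) = (if z x \<noteq> 0 then 1 else 0)" for x
    using zero_one[of x] by auto
  then have "(\<Sum>x\<in>UNIV. Re (z x)) = (\<Sum>x\<in>UNIV. if z x \<noteq> 0 then 1 else 0)"
    by simp
  then show ?thesis
    by (simp add: tr_def Re_divide_of_nat Re_sum sum.If_cases)
qed

definition hamming_dist :: "('n \<Rightarrow> bool) \<Rightarrow> ('n \<Rightarrow> bool) \<Rightarrow> nat" where
  "hamming_dist x y = card {i. x i \<noteq> y i}"

lemma hamming_dist_sign_pattern_le:
  fixes e :: "'n::finite \<Rightarrow> complex"
  shows "real (hamming_dist x (\<lambda>i. Re (e i) < 0)) \<le> (\<Sum>i\<in>UNIV. (cmod (Xop i x - e i))\<^sup>2)"
proof -
  have one_le: "1 \<le> (cmod (Xop i x - e i))\<^sup>2" if "x i \<noteq> (Re (e i) < 0)" for i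
  proof -
    have "1 \<le> \<bar>Re (Xop i x - e i)\<bar>"
      using that by (auto simp: Xop_def)
    also have "\<dots> \<le> cmod (Xop i x - e i)"
      by (rule abs_Re_le_cmod)
    finally show ?thesis
      by (simp add: one_le_power)
  qed
  have "real (hamming_dist x (\<lambda>i. Re (e i) < 0)) = (\<Sum>i\<in>{i. x i \<noteq> (Re (e i) < 0)}. 1)"
    by (simp add: hamming_dist_def)
  also have "\<dots> \<le> (\<Sum>i\<in>{i. x i \<noteq> (Re (e i) < 0)}. (cmod (Xop i x - e i))\<^sup>2)"
    by (intro sum_mono one_le) simp
  also have "\<dots> \<le> (\<Sum>i\<in>UNIV. (cmod (Xop i x - e i))\<^sup>2)"
    by (intro sum_mono2) auto
  finally show ?thesis .
qed

lemma sum_UNIV_fun_bool_prod: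
  fixes f :: "'n::finite \<Rightarrow> bool \<Rightarrow> 'a::comm_semiring_1"
  shows "(\<Sum>x\<in>UNIV. \<Prod>i\<in>UNIV. f i (x i)) = (\<Prod>i\<in>UNIV. f i True + f i False)"
proof -
  have "(\<Prod>i\<in>UNIV. \<Sum>b\<in>UNIV. f i b) = (\<Sum>x\<in>PiE UNIV (\<lambda>_. UNIV). \<Prod>i\<in>UNIV. f i (x i))"
    by (rule prod_sum_PiE) auto
  moreover have "(\<Sum>b\<in>UNIV. f i b) = f i True + f i False" for i
    by (simp add: UNIV_bool add.commute)
  ultimately show ?thesis
    by simp
qed

lemma binomial_term_ge_entropy:
  fixes l :: real and d n :: nat
  assumes "0 < l" "l \<le> 1/2" "d \<le> n" "real d \<le> l * n"
  shows "2 powr (- bin_entropy l * n) \<le> l ^ d * (1 - l) ^ (n - d)"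
proof -
  have l1: "0 < 1 - l" using assms by simp
  have pow: "2 powr (real k * log 2 a) = a ^ k" if "0 < a" for a :: real and k
  proof -
    have "2 powr (real k * log 2 a) = (2 powr log 2 a) powr real k"
      by (simp add: powr_powr mult.commute)
    also have "\<dots> = a ^ k"
      using that by (simp add: powr_realpow)
    finally show ?thesis .
  qed
  have "- bin_entropy l * n = n * log 2 (1 - l) + (l * n) * (log 2 l - log 2 (1 - l))"
    using assms by (simp add: bin_entropy_def algebra_simps)
  also have "\<dots> \<le> n * log 2 (1 - l) + d * (log 2 l - log 2 (1 - l))"
    using assms l1 by (intro add_left_mono mult_right_mono_neg) auto
  also have "\<dots> = d * log 2 l + real (n - d) * log 2 (1 - l)"
    using assms by (simp add: of_nat_diff algebra_simps)
  finally have "2 powr (- bin_entropy l * n) \<le> 2 powr (d * log 2 l + real (n - d) * log 2 (1 - l))"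
    by simp
  also have "\<dots> = l ^ d * (1 - l) ^ (n - d)"
    using pow[OF assms(1), of d] pow[OF l1, of "n - d"] by (simp only: powr_add)
  finally show ?thesis .
qed

(* Each point of the ball has mass at least 2 powr (- bin_entropy l * n) under the product of
   Bernoulli(l) measures that flips each coordinate of y with probability l. *)
lemma card_hamming_ball_le:
  fixes y :: "'n::finite \<Rightarrow> bool" and l :: real
  assumes "0 \<le> l" "l \<le> 1/2"
  shows "real (card {x. real (hamming_dist x y) \<le> l * CARD('n)})
           \<le> 2 powr (bin_entropy l * CARD('n))"
proof (cases "l = 0")
  case True
  then have "{x. real (hamming_dist x y) \<le> l * CARD('n)} = {y}"
    by (auto simp: hamming_dist_def fun_eq_iff)
  then show ?thesis
    using True by (simp add: bin_entropy_def)
next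
  case False
  then have l: "0 < l" "l \<le> 1/2" using assms by auto
  define B where "B = {x. real (hamming_dist x y) \<le> l * CARD('n)}"
  define w where "w x = (\<Prod>i\<in>UNIV. if x i \<noteq> y i then l else 1 - l)" for x :: "'n \<Rightarrow> bool"
  have w_eq: "w x = l ^ hamming_dist x y * (1 - l) ^ (CARD('n) - hamming_dist x y)" for x
  proof -
    have "card {i. x i = y i} = CARD('n) - hamming_dist x y"
    proof -
      have "{i. x i = y i} = UNIV - {i. x i \<noteq> y i}" by auto
      then show ?thesis by (simp add: card_Diff_subset hamming_dist_def)
    qed
    then show ?thesis
      by (simp add: w_def prod.If_cases hamming_dist_def Collect_neg_eq Int_def)
  qed
  have weight_ge: "2 powr (- bin_entropy l * CARD('n)) \<le> w x" if "x \<in> B" for x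
  proof -
    have "hamming_dist x y \<le> CARD('n)"
      by (simp add: hamming_dist_def card_mono)
    then show ?thesis
      using binomial_term_ge_entropy[OF l] that unfolding w_eq B_def by blast
  qed
  have "real (card B) * 2 powr (- bin_entropy l * CARD('n)) \<le> (\<Sum>x\<in>B. w x)"
    using sum_mono[OF weight_ge] by simp
  also have "\<dots> \<le> (\<Sum>x\<in>UNIV. w x)"
    using l by (intro sum_mono2) (auto simp: w_def intro: prod_nonneg)
  also have "\<dots> = 1"
    unfolding w_def by (subst sum_UNIV_fun_bool_prod) (simp add: prod.neutral)
  finally show ?thesis
    by (simp add: B_def powr_minus field_simps)
qed

lemma card_Markov_inequality:
  fixes D :: "'a \<Rightarrow> real"
  assumes "finite A" "\<And>x. x \<in> A \<Longrightarrow> 0 \<le> D x" "sum D A \<le> c * t" "0 \<le> t" "0 \<le> c"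
  shows "real (card {x\<in>A. t < D x}) \<le> c"
proof (cases "t = 0")
  case True
  then have "sum D A = 0"
    using assms by (intro antisym) (auto intro: sum_nonneg)
  then have "{x\<in>A. t < D x} = {}"
    using assms True by (simp add: sum_nonneg_eq_0_iff)
  then show ?thesis
    using assms(5) by (metis card.empty of_nat_0)
next
  case False
  then have "real (card {x\<in>A. t < D x}) * t = (\<Sum>x\<in>{x\<in>A. t < D x}. t)"
    by simp
  also have "\<dots> \<le> (\<Sum>x\<in>{x\<in>A. t < D x}. D x)"
    by (intro sum_mono) simp
  also have "\<dots> \<le> sum D A"
    using assms by (intro sum_mono2) auto
  finally have "real (card {x\<in>A. t < D x}) * t \<le> c * t"
    using assms(3) by linarith
  then show ?thesis
    using assms(4) False by simp
qed

lemma card_le_card_image_mult: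
  assumes "finite S" "\<And>y. real (card {x\<in>S. f x = y}) \<le> b"
  shows "real (card S) \<le> real (card (f ` S)) * b"
proof -
  have "card S = card (\<Union>y\<in>f ` S. {x\<in>S. f x = y})"
    by (rule arg_cong[where f = card]) auto
  also have "\<dots> \<le> (\<Sum>y\<in>f ` S. card {x\<in>S. f x = y})"
    using assms(1) by (intro card_UN_le) simp
  finally have "real (card S) \<le> (\<Sum>y\<in>f ` S. real (card {x\<in>S. f x = y}))"
    by (simp flip: of_nat_sum)
  also have "\<dots> \<le> real (card (f ` S)) * b"
    using assms(2) by (intro sum_bounded_above) simp
  finally show ?thesis .
qed

lemma card_fun_bool: "real CARD('n::finite \<Rightarrow> bool) = 2 powr CARD('n)"
  by (simp add: card_fun powr_realpow)

lemma card_image_ge_if_close_map: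
  fixes m :: "('n::finite \<Rightarrow> bool) \<Rightarrow> ('n \<Rightarrow> bool)" and \<delta> :: real
  assumes "0 \<le> \<delta>" "\<delta> \<le> 1/2"
    and close: "(\<Sum>x\<in>UNIV. real (hamming_dist x (m x))) \<le> \<delta> / 4 * CARD('n) * CARD('n \<Rightarrow> bool)"
    and large: "real CARD('n \<Rightarrow> bool) \<le> 2 * real (card Z)"
  shows "2 powr (CARD('n) - bin_entropy \<delta> * CARD('n) - 2) \<le> card (m ` Z)"
proof -
  define N where "N = real CARD('n \<Rightarrow> bool)"
  define r where "r = \<delta> * CARD('n)"
  define Bd where "Bd = 2 powr (bin_entropy \<delta> * CARD('n))"
  define S where "S = Z - {x. r < hamming_dist x (m x)}"
  have "real (card {x\<in>UNIV. r < hamming_dist x (m x)}) \<le> N / 4"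
    using close assms(1) by (intro card_Markov_inequality) (auto simp: N_def r_def mult_ac)
  then have "N / 4 \<le> card S"
    using large card_Un_le[of S "{x. r < hamming_dist x (m x)}"]
      card_mono[of "S \<union> {x. r < hamming_dist x (m x)}" Z]
    by (auto simp: S_def N_def Un_Diff_cancel)
  also have "\<dots> \<le> card (m ` S) * Bd"
  proof (rule card_le_card_image_mult)
    fix y
    have "{x\<in>S. m x = y} \<subseteq> {x. real (hamming_dist x y) \<le> \<delta> * CARD('n)}"
      by (auto simp: S_def r_def)
    then have "card {x\<in>S. m x = y} \<le> card {x. real (hamming_dist x y) \<le> \<delta> * CARD('n)}"
      by (intro card_mono) auto
    also have "real \<dots> \<le> Bd"
      unfolding Bd_def using assms(1,2) by (rule card_hamming_ball_le)
    finally show "card {x\<in>S. m x = y} \<le> Bd" by simp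
  qed simp
  also have "\<dots> \<le> card (m ` Z) * Bd"
    by (intro mult_right_mono of_nat_mono card_mono image_mono) (auto simp: S_def Bd_def)
  finally have "N / 4 / Bd \<le> card (m ` Z)"
    by (simp add: Bd_def divide_le_eq)
  moreover have "N / 4 / Bd = 2 powr (CARD('n) - bin_entropy \<delta> * CARD('n) - 2)"
    by (simp add: N_def Bd_def card_fun_bool powr_diff)
  ultimately show ?thesis by simp
qed

lemma sum_fun_apply: "(\<Sum>i\<in>A. f i) x = (\<Sum>i\<in>A. f i x)"
  by (induction A rule: infinite_finite_induct) auto

interpretation pointwise: vector_space "\<lambda>(a::'k::field) (f::'a \<Rightarrow> 'k) x. a * f x"
  by unfold_locales (auto simp: fun_eq_iff algebra_simps)

lemma independent_disjoint_supports:
  fixes G :: "('a \<Rightarrow> 'k::field) set"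
  assumes disj: "\<And>g h x. g \<in> G \<Longrightarrow> h \<in> G \<Longrightarrow> g \<noteq> h \<Longrightarrow> g x = 0 \<or> h x = 0"
    and nonzero: "\<And>g. g \<in> G \<Longrightarrow> \<exists>x. g x \<noteq> 0"
  shows "pointwise.independent G"
  unfolding pointwise.independent_explicit_finite_subsets
proof (intro allI impI ballI)
  fix S u g
  assume S: "S \<subseteq> G" "finite S" and comb: "(\<Sum>h\<in>S. (\<lambda>x. u h * h x)) = 0" and g: "g \<in> S"
  obtain x where x: "g x \<noteq> 0" using nonzero S g by blast
  have "h x = 0" if "h \<in> S - {g}" for h
    using disj[of h g x] S g x that by auto
  then have "(\<Sum>h\<in>S - {g}. u h * h x) = 0"
    by (intro sum.neutral) simp
  then have "(\<Sum>h\<in>S. u h * h x) = u g * g x"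
    by (simp add: sum.remove[OF S(2) g])
  moreover have "(\<Sum>h\<in>S. u h * h x) = 0"
    using fun_cong[OF comb, of x] by (simp add: sum_fun_apply)
  ultimately show "u g = 0" using x by simp
qed

interpretation pointwise: finite_dimensional_vector_space
  "\<lambda>(a::'k::field) (f::'a::finite \<Rightarrow> 'k) x. a * f x" "range (\<lambda>y x. if x = y then 1 else 0)"
proof
  show "pointwise.span (range (\<lambda>y (x::'a). if x = y then (1::'k) else 0)) = UNIV"
  proof (intro set_eqI iffI UNIV_I)
    fix f :: "'a \<Rightarrow> 'k"
    have "f = (\<Sum>y\<in>UNIV. (\<lambda>x. f y * (if x = y then 1 else 0)))"
      by (simp add: fun_eq_iff sum_fun_apply if_distrib cong: if_cong)
    also have "\<dots> \<in> pointwise.span (range (\<lambda>y x. if x = y then 1 else 0))"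
      by (intro pointwise.span_sum pointwise.span_scale[where c = "f _", simplified] pointwise.span_base) auto
    finally show "f \<in> pointwise.span (range (\<lambda>y x. if x = y then 1 else 0))" .
  qed
next
  show "pointwise.independent (range (\<lambda>y (x::'a). if x = y then (1::'k) else 0))"
    by (rule independent_disjoint_supports) (auto split: if_splits)
qed simp

lemma card_le_cdim:
  fixes G V :: "('n::finite) alg set"
  assumes "G \<subseteq> V"
    and "\<And>g h x. g \<in> G \<Longrightarrow> h \<in> G \<Longrightarrow> g \<noteq> h \<Longrightarrow> g x = 0 \<or> h x = 0"
    and "\<And>g. g \<in> G \<Longrightarrow> \<exists>x. g x \<noteq> 0"
  shows "card G \<le> cdim V"
  unfolding cdim_def
  using assms by (intro pointwise.independent_card_le_dim independent_disjoint_supports)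

lemma card_image_support_le_cdim:
  fixes C :: "('n::finite) alg set" and z :: "'n alg"
  assumes C: "vN_subalg C" and m: "\<And>x y. y \<in> block C x \<Longrightarrow> m y = m x"
  shows "card (m ` {x. z x \<noteq> 0}) \<le> cdim {(\<lambda>x. c x * z x) | c. c \<in> C}"
proof -
  define g where "g y = (\<lambda>x. (if m x = y then 1 else 0) * z x)" for y
  have "inj_on g (m ` {x. z x \<noteq> 0})"
    by (rule inj_onI) (auto simp: g_def fun_eq_iff split: if_splits)
  then have "card (m ` {x. z x \<noteq> 0}) = card (g ` m ` {x. z x \<noteq> 0})"
    by (simp add: card_image)
  also have "\<dots> \<le> cdim {(\<lambda>x. c x * z x) | c. c \<in> C}"
  proof (rule card_le_cdim)
    have "(\<lambda>x. if m x = y then 1 else 0) \<in> C" for y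
      using m by (intro block_constant_in[OF C]) auto
    then have "g y \<in> {(\<lambda>x. c x * z x) | c. c \<in> C}" for y
      unfolding g_def by (intro CollectI exI[of _ "\<lambda>x. if m x = y then 1 else 0"]) simp
    then show "g ` m ` {x. z x \<noteq> 0} \<subseteq> {(\<lambda>x. c x * z x) | c. c \<in> C}"
      by blast
  qed (auto simp: g_def split: if_splits)
  finally show ?thesis .
qed

theorem lemma6p6:
  fixes C :: "('n::finite) alg set" and \<epsilon> :: real and z :: "'n alg"
  assumes "0 \<le> \<epsilon>" and "\<epsilon> \<le> 1/8"
    and "vN_subalg C"
    and "(1 / real CARD('n)) * (\<Sum>i\<in>UNIV. (norm2 (\<lambda>x. Xop i x - condexp C (Xop i) x))\<^sup>2) \<le> \<epsilon>"
    and "z \<in> C" and "is_proj z" and "Re (tr z) \<ge> 1/2"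
  shows "real (cdim {(\<lambda>x. c x * z x) | c. c \<in> C})
           \<ge> 2 powr (real CARD('n) - bin_entropy (4 * \<epsilon>) * real CARD('n) - 3)"
proof -
  define E where "E i = condexp C (Xop i)" for i
  define m where "m x = (\<lambda>i. Re (E i x) < 0)" for x
  have E_in: "E i \<in> C" for i
    using assms(3) by (simp add: E_def condexp_eq_block_avg block_avg_in)
  have m_blocks: "m y = m x" if "y \<in> block C x" for x y
    using that by (simp add: m_def block_const[OF E_in])
  have "(\<Sum>x\<in>UNIV. real (hamming_dist x (m x)))
      \<le> (\<Sum>x\<in>UNIV. \<Sum>i\<in>UNIV. (cmod (Xop i x - E i x))\<^sup>2)"
    unfolding m_def by (intro sum_mono hamming_dist_sign_pattern_le)
  also have "\<dots> = (\<Sum>i\<in>UNIV. CARD('n \<Rightarrow> bool) * (norm2 (\<lambda>x. Xop i x - E i x))\<^sup>2)"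
    by (subst sum.swap) (simp add: norm2_squared)
  also have "\<dots> = CARD('n \<Rightarrow> bool) * (\<Sum>i\<in>UNIV. (norm2 (\<lambda>x. Xop i x - E i x))\<^sup>2)"
    by (simp add: sum_distrib_left)
  also have "\<dots> \<le> (4 * \<epsilon>) / 4 * CARD('n) * CARD('n \<Rightarrow> bool)"
    using assms(4) by (simp add: E_def field_simps)
  finally have close: "(\<Sum>x\<in>UNIV. real (hamming_dist x (m x)))
      \<le> (4 * \<epsilon>) / 4 * CARD('n) * CARD('n \<Rightarrow> bool)" .
  have "2 powr (CARD('n) - bin_entropy (4 * \<epsilon>) * CARD('n) - 3)
      \<le> 2 powr (CARD('n) - bin_entropy (4 * \<epsilon>) * CARD('n) - 2)"
    by (intro powr_mono) auto
  also have "\<dots> \<le> card (m ` {x. z x \<noteq> 0})"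
    using assms(1,2,7) close Re_tr_proj[OF assms(6)]
    by (intro card_image_ge_if_close_map) (auto simp: field_simps)
  also have "\<dots> \<le> cdim {(\<lambda>x. c x * z x) | c. c \<in> C}"
    using card_image_support_le_cdim[OF assms(3) m_blocks] by simp
  finally show ?thesis
    by simp
qed

end
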